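(* Let $G$ be the reflexive transitive closure of a branching on vertex set $[n]$, with adjacency matrix $M\in\{0,1\}^{n\times n}$ ($M_{j,i}=1$ iff $(i,j)$ is an edge of $G$), accessible only through a matrix-vector oracle $q\mapsto Mq$ over $GF(2)$. Consider the following procedure: initialize $lvl[v]=0$ for all $v\in[n]$ and $q=\mathbf{1}$ (all-ones vector); for $i=0,1,\ldots,\lceil\log_2 n\rceil-1$: query $r:=(Mq)\oplus q$, for every $v$ with $r_v=1$ set $lvl[v]\gets lvl[v]+2^i$, and then set $q\gets q\odot r$ (coordinatewise product). Then this procedure uses $O(\log n)$ queries and at termination $lvl[v]$ equals the level of $v$ for every vertex $v\in[n]$.
   Context: A branching is a forest of rooted trees with all edges directed away from the roots. Its reflexive transitive closure adds an edge $(u,w)$ whenever $w$ is reachable from $u$ (including a loop $(u,u)$ at every vertex). The level of a vertex is its depth in the underlying branching: roots are on level $0$, and children of a vertex on level $\ell$ are on level $\ell+1$. All arithmetic is over $GF(2)$; $\oplus$ is xor and $\odot$ is coordinatewise multiplication (and). *)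

theory Defs
  imports Complex_Main "HOL-Library.Z2"
begin

text \<open>Vertex set [n] is rendered as {0..<n}.\<close>

definition branching :: "nat \<Rightarrow> (nat \<times> nat) set \<Rightarrow> bool" where
  "branching n E \<longleftrightarrow> E \<subseteq> {..<n} \<times> {..<n} \<and> acyclic E \<and>
     (\<forall>v. \<forall>u w. (u, v) \<in> E \<and> (w, v) \<in> E \<longrightarrow> u = w)"

inductive has_level :: "nat \<Rightarrow> (nat \<times> nat) set \<Rightarrow> nat \<Rightarrow> nat \<Rightarrow> bool"
  for n E where
  root: "v < n \<Longrightarrow> (\<forall>u. (u, v) \<notin> E) \<Longrightarrow> has_level n E v 0"
| child: "has_level n E u l \<Longrightarrow> (u, v) \<in> E \<Longrightarrow> has_level n E v (Suc l)"

definition level :: "nat \<Rightarrow> (nat \<times> nat) set \<Rightarrow> nat \<Rightarrow> nat" where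
  "level n E v = (THE l. has_level n E v l)"

definition adj_closure :: "nat \<Rightarrow> (nat \<times> nat) set \<Rightarrow> nat \<Rightarrow> nat \<Rightarrow> bit" where
  "adj_closure n E j i = (if i < n \<and> j < n \<and> (i, j) \<in> E\<^sup>* then 1 else 0)"

definition matvec :: "nat \<Rightarrow> (nat \<Rightarrow> nat \<Rightarrow> bit) \<Rightarrow> (nat \<Rightarrow> bit) \<Rightarrow> nat \<Rightarrow> bit" where
  "matvec n M q = (\<lambda>j. \<Sum>i<n. M j i * q i)"

text \<open>The procedure, with access to M only through an oracle
  orc : q \<mapsto> M q.  State = (lvl, q, number of oracle queries made).
  run orc k s performs iterations i = 0, ..., k-1.\<close>

fun run :: "((nat \<Rightarrow> bit) \<Rightarrow> (nat \<Rightarrow> bit)) \<Rightarrow> nat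
            \<Rightarrow> (nat \<Rightarrow> nat) \<times> (nat \<Rightarrow> bit) \<times> nat
            \<Rightarrow> (nat \<Rightarrow> nat) \<times> (nat \<Rightarrow> bit) \<times> nat" where
  "run orc 0 s = s"
| "run orc (Suc i) s =
     (case run orc i s of (lvl, q, c) \<Rightarrow>
        (let r = (\<lambda>v. orc q v + q v) in
          (\<lambda>v. lvl v + (if r v = 1 then 2 ^ i else 0),
           \<lambda>v. q v * r v,
           Suc c)))"

definition procedure :: "((nat \<Rightarrow> bit) \<Rightarrow> (nat \<Rightarrow> bit)) \<Rightarrow> nat
            \<Rightarrow> (nat \<Rightarrow> nat) \<times> (nat \<Rightarrow> bit) \<times> nat" where
  "procedure orc n = run orc (nat \<lceil>log 2 (real n)\<rceil>) (\<lambda>_. 0, \<lambda>_. 1, 0)"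

end

theory Submission
  imports Defs
begin

text \<open>Write \<open>d\<close> for the level of \<open>v\<close> and \<open>m = 2^i\<close>.  After \<open>i\<close> rounds, \<open>lvl v = d mod m\<close> and
  \<open>q\<close> is the indicator of the vertices with \<open>m dvd d + 1\<close>.  In a branching the in-neighbours
  of \<open>v\<close> in the closure are exactly one vertex on each level \<open>0, \<dots>, d\<close>, so \<open>(M q)\<^sub>v\<close> is the
  parity of \<open>#{j \<le> d. m dvd j + 1} = (d + 1) div m\<close>; adding \<open>q\<^sub>v\<close> leaves the parity of
  \<open>d div m\<close>, which is bit \<open>i\<close> of \<open>d\<close>.  As \<open>d < n \<le> 2^\<lceil>log\<^sub>2 n\<rceil>\<close>, the last round leaves
  \<open>lvl v = d\<close>.\<close>

lemma of_nat_bit_eq: "(of_nat k :: bit) = of_bool (odd k)"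
  by (induction k) auto

lemma Suc_div_eq: "Suc d div m = d div m + of_bool (m dvd Suc d)" for d m :: nat
  by (simp add: div_Suc mod_eq_0_iff_dvd)

lemma sum_atMost_of_bool_dvd_Suc: "(\<Sum>j\<le>d. of_bool (m dvd Suc j)) = Suc d div m" for d m :: nat
  by (induction d) (simp_all add: Suc_div_eq[of 0] Suc_div_eq[of "Suc d" for d])

lemma bit_sum_dvd_Suc_eq_odd_div:
  "(\<Sum>j\<le>d. of_bool (m dvd Suc j)) + of_bool (m dvd Suc d) = (of_bool (odd (d div m)) :: bit)"
  for d m :: nat
proof -
  have "(\<Sum>j\<le>d. of_bool (m dvd Suc j)) + of_bool (m dvd Suc d)
      = (of_nat (Suc d div m + of_bool (m dvd Suc d)) :: bit)"
    unfolding sum_atMost_of_bool_dvd_Suc[symmetric] by (simp only: of_nat_add of_nat_sum of_nat_of_bool)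
  also have "Suc d div m + of_bool (m dvd Suc d) = d div m + 2 * of_bool (m dvd Suc d)"
    by (simp add: Suc_div_eq)
  finally show ?thesis by (simp only: of_nat_bit_eq) simp
qed

lemma mod_mult2_eq_if: "d mod (2 * m) = d mod m + (if odd (d div m) then m else 0)" for d m :: nat
  by (simp add: mod_mult2_eq[of d m 2, simplified mult.commute[of m 2]] odd_iff_mod_2_eq_one)

lemma mult2_dvd_Suc_iff: "2 * m dvd Suc d \<longleftrightarrow> m dvd Suc d \<and> odd (d div m)" for d m :: nat
proof -
  have "2 * m dvd Suc d \<longleftrightarrow> m dvd Suc d \<and> even (Suc d div m)"
    using mod_mult2_eq[of "Suc d" m 2]
    by (cases "m = 0") (auto simp: dvd_eq_mod_eq_0 mult.commute even_iff_mod_2_eq_zero)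
  then show ?thesis by (auto simp: Suc_div_eq)
qed

lemma has_level_unique:
  assumes "branching n E" and "has_level n E v l" and "has_level n E v l'"
  shows "l = l'"
  using assms(2,3)
proof (induction arbitrary: l')
  case (root v)
  from root.prems show ?case by cases (use root.hyps in auto)
next
  case (child u l v)
  from child.prems show ?case
  proof cases
    case root
    then show ?thesis using child.hyps by auto
  next
    case (child u' l'')
    then have "u' = u" using assms(1) \<open>(u, v) \<in> E\<close> unfolding branching_def by blast
    then show ?thesis using child child.IH by auto
  qed
qed

lemma has_level_exists:
  assumes "branching n E" and "v < n"
  shows "\<exists>l. has_level n E v l"
proof -
  have "E \<subseteq> {..<n} \<times> {..<n}" and "acyclic E"
    using assms(1) unfolding branching_def by auto
  then have "wf E" by (intro finite_acyclic_wf) (auto intro: finite_subset)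
  then show ?thesis using assms(2)
  proof (induction v rule: wf_induct_rule)
    case (less v)
    show ?case
    proof (cases "\<exists>u. (u, v) \<in> E")
      case True
      then obtain u where "(u, v) \<in> E" by blast
      moreover from this have "u < n" using \<open>E \<subseteq> {..<n} \<times> {..<n}\<close> by auto
      ultimately show ?thesis using less.IH has_level.child by blast
    next
      case False
      then show ?thesis using less.prems has_level.root by blast
    qed
  qed
qed

lemma level_eqI:
  assumes "branching n E" and "has_level n E v l"
  shows "level n E v = l"
  unfolding level_def using assms has_level_unique by (intro the_equality) blast+

lemma has_level_level:
  assumes "branching n E" and "v < n"
  shows "has_level n E v (level n E v)"
  using has_level_exists[OF assms] level_eqI[OF assms(1)] by metis

lemma ancestors_subset_lessThan:
  assumes "E \<subseteq> {..<n} \<times> {..<n}" and "v < n"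
  shows "{u. (u, v) \<in> E\<^sup>*} \<subseteq> {..<n}"
proof
  fix u assume "u \<in> {u. (u, v) \<in> E\<^sup>*}"
  then have "(u, v) \<in> E\<^sup>*" by simp
  then show "u \<in> {..<n}"
    by (cases rule: converse_rtranclE) (use assms in auto)
qed

lemma bij_betw_level_ancestors:
  assumes "branching n E" and "has_level n E v d"
  shows "bij_betw (level n E) {u. (u, v) \<in> E\<^sup>*} {..d}"
  using assms(2)
proof induction
  case (root v)
  have "{u. (u, v) \<in> E\<^sup>*} = {v}"
    using root.hyps(2) by (auto elim: rtranclE)
  moreover have "level n E v = 0"
    using level_eqI[OF assms(1) has_level.root[OF root.hyps]] .
  ultimately show ?case by (simp add: bij_betw_def)
next
  case (child u l v)
  have ancestors: "{w. (w, v) \<in> E\<^sup>*} = {w. (w, u) \<in> E\<^sup>*} \<union> {v}"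
  proof (intro equalityI subsetI)
    fix w assume "w \<in> {w. (w, v) \<in> E\<^sup>*}"
    then have "(w, v) \<in> E\<^sup>*" by simp
    then show "w \<in> {w. (w, u) \<in> E\<^sup>*} \<union> {v}"
    proof (cases rule: rtranclE)
      case (step y)
      then have "y = u" using assms(1) child.hyps(2) unfolding branching_def by blast
      then show ?thesis using step by simp
    qed simp
  qed (use child.hyps(2) in \<open>auto intro: rtrancl_into_rtrancl\<close>)
  have "v \<notin> {w. (w, u) \<in> E\<^sup>*}"
    using assms(1) child.hyps(2) unfolding branching_def acyclic_def
    by (auto dest: rtrancl_into_trancl1)
  moreover have level_v: "level n E v = Suc l"
    using level_eqI[OF assms(1) has_level.child[OF child.hyps]] .
  ultimately have "bij_betw (level n E) ({w. (w, u) \<in> E\<^sup>*} \<union> {v}) ({..l} \<union> {level n E v})"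
    by (intro notIn_Un_bij_betw child.IH) auto
  then show ?case
    unfolding ancestors level_v by (simp add: atMost_Suc)
qed

lemma level_less:
  assumes "branching n E" and "v < n"
  shows "level n E v < n"
proof -
  have "Suc (level n E v) = card {u. (u, v) \<in> E\<^sup>*}"
    using bij_betw_same_card[OF bij_betw_level_ancestors[OF assms(1) has_level_level[OF assms]]]
    by simp
  also have "\<dots> \<le> card {..<n}"
    using assms ancestors_subset_lessThan unfolding branching_def by (intro card_mono) auto
  finally show ?thesis by simp
qed

lemma matvec_adj_closure_level:
  assumes "branching n E" and "v < n" and "\<And>u. u < n \<Longrightarrow> q u = g (level n E u)"
  shows "matvec n (adj_closure n E) q v = (\<Sum>j\<le>level n E v. g j)"
proof -
  let ?A = "{u. (u, v) \<in> E\<^sup>*}"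
  have A: "?A \<subseteq> {..<n}"
    using ancestors_subset_lessThan assms(1,2) unfolding branching_def by blast
  have "matvec n (adj_closure n E) q v = (\<Sum>u<n. if u \<in> ?A then q u else 0)"
    unfolding matvec_def adj_closure_def using assms(2) by (intro sum.cong) auto
  also have "\<dots> = (\<Sum>u\<in>{..<n} \<inter> ?A. q u)"
    by (rule sum.inter_restrict[symmetric]) simp
  also have "\<dots> = (\<Sum>u\<in>?A. g (level n E u))"
    using A assms(3) by (intro sum.cong) auto
  also have "\<dots> = (\<Sum>j\<le>level n E v. g j)"
    using bij_betw_level_ancestors[OF assms(1) has_level_level[OF assms(1,2)]]
    by (rule sum.reindex_bij_betw)
  finally show ?thesis .
qed

lemma run_invariant:
  assumes "branching n E"
    and "run (matvec n (adj_closure n E)) i (\<lambda>_. 0, \<lambda>_. 1, 0) = (lvl, q, c)"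
  shows "c = i \<and> (\<forall>v<n. lvl v = level n E v mod 2 ^ i \<and>
                           q v = of_bool (2 ^ i dvd Suc (level n E v)))"
  using assms(2)
proof (induction i arbitrary: lvl q c)
  case 0
  then show ?case by auto
next
  case (Suc i)
  let ?M = "matvec n (adj_closure n E)"
  obtain lvl' q' c' where prev: "run ?M i (\<lambda>_. 0, \<lambda>_. 1, 0) = (lvl', q', c')"
    by (metis prod_cases3)
  note IH = Suc.IH[OF prev]
  define r where "r v = ?M q' v + q' v" for v
  have r: "r v = of_bool (odd (level n E v div 2 ^ i))" if "v < n" for v
  proof -
    have "?M q' v = (\<Sum>j\<le>level n E v. of_bool (2 ^ i dvd Suc j))"
      using IH by (intro matvec_adj_closure_level[OF assms(1) that]) simp
    moreover have "q' v = of_bool (2 ^ i dvd Suc (level n E v))"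
      using IH that by simp
    ultimately show ?thesis unfolding r_def by (simp only: bit_sum_dvd_Suc_eq_odd_div)
  qed
  from Suc.prems prev have step:
    "lvl = (\<lambda>v. lvl' v + (if r v = 1 then 2 ^ i else 0))" "q = (\<lambda>v. q' v * r v)" "c = Suc c'"
    by (simp_all add: Let_def r_def)
  show ?case
  proof (intro conjI allI impI)
    show "c = Suc i" using step IH by simp
  next
    fix v assume "v < n"
    then show "lvl v = level n E v mod 2 ^ Suc i" and
      "q v = of_bool (2 ^ Suc i dvd Suc (level n E v))"
      unfolding step using IH r by (simp_all add: mod_mult2_eq_if mult2_dvd_Suc_iff)
  qed
qed

lemma le_two_power_ceiling_log: "n \<le> 2 ^ nat \<lceil>log 2 (real n)\<rceil>"
proof (cases "n = 0")
  case False
  then have "real n = 2 powr (log 2 (real n))" by simp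
  also have "\<dots> \<le> 2 powr real (nat \<lceil>log 2 (real n)\<rceil>)"
    by (intro powr_mono) (auto intro: real_nat_ceiling_ge)
  also have "\<dots> = 2 ^ nat \<lceil>log 2 (real n)\<rceil>" by (simp add: powr_realpow)
  finally show ?thesis by (metis of_nat_le_iff of_nat_numeral of_nat_power)
qed simp

theorem lemma21:
  fixes n :: nat and E :: "(nat \<times> nat) set"
  assumes "branching n E"
  shows "case procedure (matvec n (adj_closure n E)) n of (lvl, q, c) \<Rightarrow>
           c \<le> nat \<lceil>log 2 (real n)\<rceil> \<and> (\<forall>v<n. lvl v = level n E v)"
proof -
  let ?k = "nat \<lceil>log 2 (real n)\<rceil>"
  obtain lvl q c where result: "procedure (matvec n (adj_closure n E)) n = (lvl, q, c)"
    by (metis prod_cases3)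
  have "c = ?k" and "\<forall>v<n. lvl v = level n E v mod 2 ^ ?k"
    using run_invariant[OF assms result[unfolded procedure_def]] by auto
  moreover have "level n E v < 2 ^ ?k" if "v < n" for v
    using level_less[OF assms that] le_two_power_ceiling_log[of n] by linarith
  ultimately show ?thesis using result by simp
qed

end
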